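(* Let $\|\cdot\|_C$ be any norm on $\mathbb{R}^N$ and $\|\cdot\|_R$ any norm on $\mathbb{R}^P$, and let $f_D^M$ be defined as in the context. Then for every $X\in\mathbb{R}^{N\times P}$ the limit $f_D^\infty(X)=\lim_{M\to\infty} f_D^M(X)$ exists (and is finite), and the map $X\mapsto f_D^\infty(X)$ is a norm on $\mathbb{R}^{N\times P}$.
   Context: For $M\ge 1$ and $X\in\mathbb{R}^{N\times P}$, define $$f_D^M(X)=\inf\Big\{\tfrac12\sum_{m=1}^M\big(\|u_m\|_C^2+\|v_m\|_R^2\big)\;:\;U=[u_1,\dots,u_M]\in\mathbb{R}^{N\times M},\ V=[v_1,\dots,v_M]\in\mathbb{R}^{P\times M},\ X=UV^\top\Big\},$$ where $u_m$, $v_m$ denote the $m$-th columns of $U$, $V$; if $M<\operatorname{rank}X$ the set is empty and $f_D^M(X)=+\infty$. The limit $f_D^\infty(X)$ is denoted $\|X\|_D$ (the "decomposition norm"). *)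

theory Defs
  imports "HOL-Analysis.Analysis" "HOL-Library.Extended_Real"
begin

definition is_norm :: "('a::real_vector \<Rightarrow> real) \<Rightarrow> bool" where
  "is_norm f \<longleftrightarrow>
     (\<forall>x. 0 \<le> f x) \<and> (\<forall>x. f x = 0 \<longleftrightarrow> x = 0) \<and>
     (\<forall>c x. f (c *\<^sub>R x) = \<bar>c\<bar> * f x) \<and> (\<forall>x y. f (x + y) \<le> f x + f y)"

text \<open>Matrices X in R^(N x P) are of type real^'p^'n (row index 'n, column index 'p).
  U = [u_1..u_M] and V = [v_1..v_M] are given by their columns u m, v m (m < M);
  X = U V^T means X_ij = sum_{m<M} (u m)_i (v m)_j.
  f_D^M(X) is the infimum in the extended reals, so it is +infinity on the empty set.\<close>
definition fDM :: "(real^'n \<Rightarrow> real) \<Rightarrow> (real^'p \<Rightarrow> real) \<Rightarrow> nat \<Rightarrow> real^'p^'n \<Rightarrow> ereal" where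
  "fDM C R M X = Inf {ereal ((1/2) * (\<Sum>m<M. (C (u m))\<^sup>2 + (R (v m))\<^sup>2)) | u v.
      (\<forall>i j. X $ i $ j = (\<Sum>m<M. u m $ i * v m $ j))}"

definition fD_inf :: "(real^'n \<Rightarrow> real) \<Rightarrow> (real^'p \<Rightarrow> real) \<Rightarrow> real^'p^'n \<Rightarrow> real" where
  "fD_inf C R X = real_of_ereal (lim (\<lambda>M. fDM C R M X))"

end

theory Submission
  imports Defs
begin

(* Call  cost U V = 1/2 * sum_m (||u_m||_C^2 + ||v_m||_R^2)  the cost of a rank-M
   decomposition X = U V^T.  Padding a decomposition by a zero column keeps its cost,
   so the cost sets grow with M and f_D^M(X) decreases in M; its limit is the
   infimum, over all M, of all decomposition costs.  Every X has some decomposition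
   (through the standard basis), so this infimum is a finite real number.

   The norm axioms then follow from an abstract principle (inf_cost_is_norm): if a
   family of nonnegative cost sets S X is nonempty, scales like |c| under X |-> cX,
   adds under X + Y (concatenate decompositions), and is bounded away from 0 for
   X ~= 0, then X |-> Inf (S X) is a norm.  The last property for decompositions
   comes from 2 |a b| <= a^2 + b^2 together with the fact that every norm on a
   finite-dimensional space dominates the Euclidean norm (is_norm_dominates_norm). *)

lemma is_norm_zero: "is_norm C \<Longrightarrow> C 0 = 0"
  unfolding is_norm_def by blast

lemma is_norm_nonneg: "is_norm C \<Longrightarrow> 0 \<le> C x"
  unfolding is_norm_def by blast

lemma is_norm_definite: "is_norm C \<Longrightarrow> C x = 0 \<longleftrightarrow> x = 0"
  unfolding is_norm_def by blast

lemma is_norm_scale: "is_norm C \<Longrightarrow> C (c *\<^sub>R x) = \<bar>c\<bar> * C x"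
  unfolding is_norm_def by blast

lemma is_norm_triangle: "is_norm C \<Longrightarrow> C (x + y) \<le> C x + C y"
  unfolding is_norm_def by blast

lemma is_norm_sum:
  assumes "is_norm C" and "finite A"
  shows "C (\<Sum>i\<in>A. f i) \<le> (\<Sum>i\<in>A. C (f i))"
  using assms(2)
  by (induction A rule: finite_induct)
     (auto simp: is_norm_zero[OF assms(1)] intro: order_trans[OF is_norm_triangle[OF assms(1)]])

lemma is_norm_reverse_triangle:
  assumes "is_norm C"
  shows "\<bar>C x - C y\<bar> \<le> C (x - y)"
proof -
  have "C x \<le> C (x - y) + C y" using is_norm_triangle[OF assms, of "x - y" y] by simp
  moreover have "C y \<le> C (y - x) + C x" using is_norm_triangle[OF assms, of "y - x" x] by simp
  moreover have "C (y - x) = C (x - y)" using is_norm_scale[OF assms, of "-1" "x - y"] by simp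
  ultimately show ?thesis by linarith
qed

section \<open>Norms on finite-dimensional spaces\<close>

text \<open>Any norm is bounded above by a multiple of the Euclidean norm
  (expand in an orthonormal basis).\<close>
lemma is_norm_le_norm:
  fixes C :: "'a::euclidean_space \<Rightarrow> real"
  assumes "is_norm C"
  shows "C u \<le> (\<Sum>b\<in>Basis. C b) * norm u"
proof -
  have "C u = C (\<Sum>b\<in>Basis. (u \<bullet> b) *\<^sub>R b)" by (simp add: euclidean_representation)
  also have "\<dots> \<le> (\<Sum>b\<in>Basis. \<bar>u \<bullet> b\<bar> * C b)"
    using is_norm_sum[OF assms finite_Basis, of "\<lambda>b. (u \<bullet> b) *\<^sub>R b"]
    by (simp add: is_norm_scale[OF assms])
  also have "\<dots> \<le> (\<Sum>b\<in>Basis. norm u * C b)"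
    by (intro sum_mono mult_right_mono Basis_le_norm is_norm_nonneg[OF assms])
  finally show ?thesis by (simp add: sum_distrib_left mult.commute)
qed

lemma is_norm_continuous:
  fixes C :: "'a::euclidean_space \<Rightarrow> real"
  assumes "is_norm C"
  shows "continuous_on UNIV C"
proof (rule lipschitz_on_continuous_on)
  show "(\<Sum>b\<in>Basis. C b)-lipschitz_on UNIV C"
  proof (rule lipschitz_onI)
    fix x y :: 'a
    have "dist (C x) (C y) \<le> C (x - y)"
      using is_norm_reverse_triangle[OF assms] by (simp add: dist_real_def)
    also have "\<dots> \<le> (\<Sum>b\<in>Basis. C b) * dist x y"
      using is_norm_le_norm[OF assms] by (simp add: dist_norm)
    finally show "dist (C x) (C y) \<le> (\<Sum>b\<in>Basis. C b) * dist x y" .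
  qed (simp add: sum_nonneg is_norm_nonneg[OF assms])
qed

text \<open>Conversely, every norm dominates the Euclidean norm: a norm attains a positive
  minimum on the compact unit sphere.  This is what makes the decomposition norm definite.\<close>
lemma is_norm_dominates_norm:
  fixes C :: "'a::euclidean_space \<Rightarrow> real"
  assumes "is_norm C"
  shows "\<exists>a>0. \<forall>u. norm u \<le> a * C u"
proof -
  have "\<exists>x\<in>sphere (0::'a) 1. \<forall>y\<in>sphere 0 1. C x \<le> C y"
    using is_norm_continuous[OF assms]
    by (intro continuous_attains_inf compact_sphere) (auto intro: continuous_on_subset)
  then obtain x :: 'a where x: "x \<in> sphere 0 1" and min: "\<And>y. y \<in> sphere 0 1 \<Longrightarrow> C x \<le> C y"
    by blast
  have pos: "C x > 0"
    using x is_norm_nonneg[OF assms, of x] is_norm_definite[OF assms, of x] by fastforce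
  have "norm u \<le> (1 / C x) * C u" for u
  proof (cases "u = 0")
    case False
    have "C x \<le> C ((1 / norm u) *\<^sub>R u)" using False by (intro min) simp
    also have "\<dots> = C u / norm u" by (simp add: is_norm_scale[OF assms])
    finally show ?thesis using False pos by (simp add: field_simps)
  qed (simp add: is_norm_zero[OF assms])
  then show ?thesis using pos by (intro exI[of _ "1 / C x"]) auto
qed

lemma is_norm_dominates_coordinates:
  fixes C :: "real^'n \<Rightarrow> real"
  assumes "is_norm C"
  shows "\<exists>a>0. \<forall>u i. \<bar>u $ i\<bar> \<le> a * C u"
  using is_norm_dominates_norm[OF assms] by (meson component_le_norm_cart order_trans)

section \<open>Norms given by infima of costs\<close>

lemma inf_cost_is_norm:
  fixes S :: "'a::real_vector \<Rightarrow> real set"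
  assumes nonempty: "\<And>X. S X \<noteq> {}"
    and nonneg: "\<And>X s. s \<in> S X \<Longrightarrow> 0 \<le> s"
    and scale: "\<And>c X s. s \<in> S X \<Longrightarrow> \<bar>c\<bar> * s \<in> S (c *\<^sub>R X)"
    and add: "\<And>X Y s t. s \<in> S X \<Longrightarrow> t \<in> S Y \<Longrightarrow> s + t \<in> S (X + Y)"
    and definite: "\<And>X. X \<noteq> 0 \<Longrightarrow> \<exists>e>0. \<forall>s\<in>S X. e \<le> s"
  shows "is_norm (\<lambda>X. Inf (S X))"
proof -
  define g where "g X = Inf (S X)" for X
  have bdd: "bdd_below (S X)" for X using nonneg by (meson bdd_belowI)
  have lower: "g X \<le> s" if "s \<in> S X" for X s
    unfolding g_def using cInf_lower[OF that bdd] .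
  have greatest: "y \<le> g X" if "\<And>s. s \<in> S X \<Longrightarrow> y \<le> s" for X y
    unfolding g_def using cInf_greatest[OF nonempty that] .
  have g_nonneg: "0 \<le> g X" for X by (rule greatest) (rule nonneg)
  have g_zero: "g 0 = 0"
  proof -
    obtain s where "s \<in> S 0" using nonempty by blast
    then have "0 \<in> S 0" using scale[of s 0 0] by simp
    then show ?thesis using lower g_nonneg by (meson antisym)
  qed
  have g_definite: "g X = 0 \<longleftrightarrow> X = 0" for X
  proof
    assume "g X = 0"
    show "X = 0"
    proof (rule ccontr)
      assume "X \<noteq> 0"
      then obtain e where "e > 0" "\<forall>s\<in>S X. e \<le> s" using definite by blast
      then show False using greatest[of X e] \<open>g X = 0\<close> by auto
    qed
  qed (simp add: g_zero)
  text \<open>Scaling by c costs at most a factor |c|; applying this to 1/c gives equality.\<close>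
  have scale_le: "g (c *\<^sub>R X) \<le> \<bar>c\<bar> * g X" if "c \<noteq> 0" for c X
  proof -
    have "g (c *\<^sub>R X) / \<bar>c\<bar> \<le> g X"
    proof (rule greatest)
      fix s assume "s \<in> S X"
      then have "g (c *\<^sub>R X) \<le> \<bar>c\<bar> * s" by (intro lower scale)
      then show "g (c *\<^sub>R X) / \<bar>c\<bar> \<le> s" using that by (simp add: divide_le_eq mult.commute)
    qed
    then show ?thesis using that by (simp add: divide_le_eq mult.commute)
  qed
  have g_scale: "g (c *\<^sub>R X) = \<bar>c\<bar> * g X" for c X
  proof (cases "c = 0")
    case False
    have "g X \<le> \<bar>1 / c\<bar> * g (c *\<^sub>R X)" using scale_le[of "1 / c" "c *\<^sub>R X"] False by simp
    then have "\<bar>c\<bar> * g X \<le> g (c *\<^sub>R X)" using False by (simp add: field_simps)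
    then show ?thesis using scale_le[OF False, of X] by linarith
  qed (simp add: g_zero)
  have g_triangle: "g (X + Y) \<le> g X + g Y" for X Y
  proof -
    have "g (X + Y) - g X \<le> t" if t: "t \<in> S Y" for t
    proof -
      have "g (X + Y) - t \<le> g X"
        by (rule greatest) (use lower[OF add[OF _ t]] in force)
      then show ?thesis by simp
    qed
    then have "g (X + Y) - g X \<le> g Y" by (rule greatest)
    then show ?thesis by simp
  qed
  show ?thesis
    using g_nonneg g_definite g_scale g_triangle unfolding is_norm_def g_def by blast
qed

section \<open>Decompositions of a matrix and their costs\<close>

definition decomposes :: "nat \<Rightarrow> (nat \<Rightarrow> real^'n) \<Rightarrow> (nat \<Rightarrow> real^'p) \<Rightarrow> real^'p^'n \<Rightarrow> bool" where
  "decomposes M u v X \<longleftrightarrow> (\<forall>i j. X $ i $ j = (\<Sum>m<M. u m $ i * v m $ j))"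

definition dec_cost :: "(real^'n \<Rightarrow> real) \<Rightarrow> (real^'p \<Rightarrow> real) \<Rightarrow> nat \<Rightarrow>
    (nat \<Rightarrow> real^'n) \<Rightarrow> (nat \<Rightarrow> real^'p) \<Rightarrow> real" where
  "dec_cost C R M u v = (1/2) * (\<Sum>m<M. (C (u m))\<^sup>2 + (R (v m))\<^sup>2)"

definition rank_costs :: "(real^'n \<Rightarrow> real) \<Rightarrow> (real^'p \<Rightarrow> real) \<Rightarrow> nat \<Rightarrow> real^'p^'n \<Rightarrow> real set" where
  "rank_costs C R M X = {dec_cost C R M u v | u v. decomposes M u v X}"

definition dec_costs :: "(real^'n \<Rightarrow> real) \<Rightarrow> (real^'p \<Rightarrow> real) \<Rightarrow> real^'p^'n \<Rightarrow> real set" where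
  "dec_costs C R X = (\<Union>M. rank_costs C R M X)"

lemma rank_costsE:
  assumes "s \<in> rank_costs C R M X"
  obtains u v where "decomposes M u v X" and "s = dec_cost C R M u v"
  using assms unfolding rank_costs_def by blast

lemma rank_costsI: "decomposes M u v X \<Longrightarrow> dec_cost C R M u v = s \<Longrightarrow> s \<in> rank_costs C R M X"
  unfolding rank_costs_def by blast

lemma fDM_eq_INF: "fDM C R M X = (INF s\<in>rank_costs C R M X. ereal s)"
  unfolding fDM_def rank_costs_def dec_cost_def decomposes_def by (rule arg_cong[of _ _ Inf]) blast

lemma sum_lessThan_add: "(\<Sum>i<m + n. f i) = (\<Sum>i<m. f i) + (\<Sum>i<n. f (m + i::nat))"
  by (induction n) (auto simp: add.assoc)

text \<open>Padding with zero columns: rank-M costs are also rank-M' costs for M \<le> M'.\<close>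
lemma rank_costs_mono:
  assumes C: "is_norm C" and R: "is_norm R" and "M \<le> M'"
  shows "rank_costs C R M X \<subseteq> rank_costs C R M' X"
proof
  fix s assume "s \<in> rank_costs C R M X"
  then obtain u v where d: "decomposes M u v X" and s: "s = dec_cost C R M u v"
    by (rule rank_costsE)
  define u' where "u' m = (if m < M then u m else 0)" for m
  define v' where "v' m = (if m < M then v m else 0)" for m
  have pad: "(\<Sum>m<M'. f m) = (\<Sum>m<M. f m)" if "\<And>m. M \<le> m \<Longrightarrow> f m = 0" for f :: "nat \<Rightarrow> real"
    using that \<open>M \<le> M'\<close> by (intro sum.mono_neutral_right) auto
  have "decomposes M' u' v' X"
    using d unfolding decomposes_def by (subst pad) (auto simp: u'_def v'_def)
  moreover have "dec_cost C R M' u' v' = s"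
    unfolding s dec_cost_def
    by (subst pad) (auto simp: u'_def v'_def is_norm_zero[OF C] is_norm_zero[OF R])
  ultimately show "s \<in> rank_costs C R M' X" by (rule rank_costsI)
qed

text \<open>Every matrix has a decomposition: X = sum over rows k of e_k (row k of X)^T.\<close>
lemma rank_costs_nonempty:
  fixes X :: "real^'p^'n"
  shows "rank_costs C R CARD('n) X \<noteq> {}"
proof -
  obtain h where h: "bij_betw h {..<CARD('n)} (UNIV :: 'n set)"
    using ex_bij_betw_nat_finite[of "UNIV :: 'n set"] by (auto simp: atLeast0LessThan)
  define u where "u m = (axis (h m) 1 :: real^'n)" for m
  define v where "v m = (\<chi> j. X $ h m $ j)" for m
  have "X $ i $ j = (\<Sum>m<CARD('n). u m $ i * v m $ j)" for i j
  proof -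
    have "(\<Sum>m<CARD('n). u m $ i * v m $ j) = (\<Sum>k\<in>UNIV. (if i = k then 1 else 0) * X $ k $ j)"
      using sum.reindex_bij_betw[OF h, of "\<lambda>k. (if i = k then 1 else 0) * X $ k $ j"]
      by (simp add: u_def v_def axis_def)
    also have "\<dots> = X $ i $ j" by (simp add: of_bool_def[symmetric])
    finally show ?thesis by simp
  qed
  then show ?thesis using rank_costsI unfolding decomposes_def by blast
qed

lemma dec_cost_nonneg: "0 \<le> dec_cost C R M u v"
  unfolding dec_cost_def by (intro mult_nonneg_nonneg sum_nonneg) auto

text \<open>Scaling X by c: scale both factors by sqrt |c| (one of them with the sign of c).\<close>
lemma rank_costs_scale:
  assumes C: "is_norm C" and R: "is_norm R" and s: "s \<in> rank_costs C R M X"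
  shows "\<bar>c\<bar> * s \<in> rank_costs C R M (c *\<^sub>R X)"
proof -
  obtain u v where d: "decomposes M u v X" and sv: "s = dec_cost C R M u v"
    using s by (rule rank_costsE)
  define u' where "u' m = sqrt \<bar>c\<bar> *\<^sub>R u m" for m
  define v' where "v' m = (sgn c * sqrt \<bar>c\<bar>) *\<^sub>R v m" for m
  have factor: "sqrt \<bar>c\<bar> * (sgn c * sqrt \<bar>c\<bar>) = c"
  proof -
    have "sqrt \<bar>c\<bar> * (sgn c * sqrt \<bar>c\<bar>) = sgn c * (sqrt \<bar>c\<bar> * sqrt \<bar>c\<bar>)"
      by (simp only: mult_ac)
    then show ?thesis by (simp add: sgn_mult_abs)
  qed
  have "u' m $ i * v' m $ j = c * (u m $ i * v m $ j)" for m i j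
  proof -
    have "u' m $ i * v' m $ j = (sqrt \<bar>c\<bar> * (sgn c * sqrt \<bar>c\<bar>)) * (u m $ i * v m $ j)"
      by (simp add: u'_def v'_def mult_ac)
    then show ?thesis by (simp only: factor)
  qed
  then have dec: "decomposes M u' v' (c *\<^sub>R X)"
    using d unfolding decomposes_def by (simp add: sum_distrib_left)
  have cost: "dec_cost C R M u' v' = \<bar>c\<bar> * s"
  proof -
    have "\<bar>sgn c * sqrt \<bar>c\<bar>\<bar> = sqrt \<bar>c\<bar>" by (cases "c = 0") (auto simp: abs_mult)
    then have "(C (u' m))\<^sup>2 + (R (v' m))\<^sup>2 = \<bar>c\<bar> * ((C (u m))\<^sup>2 + (R (v m))\<^sup>2)" for m
      by (simp add: u'_def v'_def is_norm_scale[OF C] is_norm_scale[OF R]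
          power_mult_distrib distrib_left)
    then show ?thesis unfolding sv dec_cost_def by (simp add: sum_distrib_left)
  qed
  show ?thesis using dec cost by (rule rank_costsI)
qed

text \<open>Adding matrices: concatenate the two decompositions.\<close>
lemma rank_costs_add:
  assumes s: "s \<in> rank_costs C R M X" and t: "t \<in> rank_costs C R M' Y"
  shows "s + t \<in> rank_costs C R (M + M') (X + Y)"
proof -
  obtain u v where d: "decomposes M u v X" and sv: "s = dec_cost C R M u v"
    using s by (rule rank_costsE)
  obtain u2 v2 where d2: "decomposes M' u2 v2 Y" and tv: "t = dec_cost C R M' u2 v2"
    using t by (rule rank_costsE)
  define u' where "u' m = (if m < M then u m else u2 (m - M))" for m
  define v' where "v' m = (if m < M then v m else v2 (m - M))" for m
  have first: "(\<Sum>m<M. f (u' m) (v' m)) = (\<Sum>m<M. f (u m) (v m))" for f :: "_ \<Rightarrow> _ \<Rightarrow> real"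
    by (intro sum.cong) (auto simp: u'_def v'_def)
  have second: "(\<Sum>m<M'. f (u' (M + m)) (v' (M + m))) = (\<Sum>m<M'. f (u2 m) (v2 m))"
    for f :: "_ \<Rightarrow> _ \<Rightarrow> real"
    by (simp add: u'_def v'_def)
  have "decomposes (M + M') u' v' (X + Y)"
    unfolding decomposes_def
  proof (intro allI)
    fix i j
    show "(X + Y) $ i $ j = (\<Sum>m<M + M'. u' m $ i * v' m $ j)"
      using d d2 first[of "\<lambda>x y. x $ i * y $ j"] second[of "\<lambda>x y. x $ i * y $ j"]
      unfolding decomposes_def sum_lessThan_add by simp
  qed
  moreover have "dec_cost C R (M + M') u' v' = s + t"
    using first[of "\<lambda>x y. (C x)\<^sup>2 + (R y)\<^sup>2"] second[of "\<lambda>x y. (C x)\<^sup>2 + (R y)\<^sup>2"]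
    unfolding sv tv dec_cost_def sum_lessThan_add by (simp add: distrib_left)
  ultimately show ?thesis by (rule rank_costsI)
qed

text \<open>Each entry of X is controlled by the cost of any of its decompositions:
  |X_ij| \<le> sum_m |u_m i| |v_m j| \<le> a b sum_m C(u_m) R(v_m) \<le> a b cost.\<close>
lemma rank_costs_entry_bound:
  assumes C: "is_norm C" and R: "is_norm R"
  obtains K where "K > 0" and "\<And>M X s i j. s \<in> rank_costs C R M X \<Longrightarrow> \<bar>X $ i $ j\<bar> \<le> K * s"
proof -
  obtain a where a: "a > 0" "\<And>u i. \<bar>u $ i\<bar> \<le> a * C u"
    using is_norm_dominates_coordinates[OF C] by blast
  obtain b where b: "b > 0" "\<And>v j. \<bar>v $ j\<bar> \<le> b * R v"
    using is_norm_dominates_coordinates[OF R] by blast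
  have "\<bar>X $ i $ j\<bar> \<le> a * b * s" if s: "s \<in> rank_costs C R M X" for M X s i j
  proof -
    obtain u v where d: "decomposes M u v X" and sv: "s = dec_cost C R M u v"
      using s by (rule rank_costsE)
    have "\<bar>X $ i $ j\<bar> \<le> (\<Sum>m<M. \<bar>u m $ i\<bar> * \<bar>v m $ j\<bar>)"
      using d sum_abs[of "\<lambda>m. u m $ i * v m $ j" "{..<M}"]
      unfolding decomposes_def by (simp add: abs_mult)
    also have "\<dots> \<le> (\<Sum>m<M. a * b * ((1/2) * ((C (u m))\<^sup>2 + (R (v m))\<^sup>2)))"
    proof (rule sum_mono)
      fix m
      have "\<bar>u m $ i\<bar> * \<bar>v m $ j\<bar> \<le> (a * C (u m)) * (b * R (v m))"
        using a b is_norm_nonneg[OF C, of "u m"] by (intro mult_mono) auto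
      also have "\<dots> = a * b * (C (u m) * R (v m))" by (simp only: mult_ac)
      also have "\<dots> \<le> a * b * ((1/2) * ((C (u m))\<^sup>2 + (R (v m))\<^sup>2))"
        using sum_squares_bound[of "C (u m)" "R (v m)"] a(1) b(1) by (intro mult_left_mono) auto
      finally show "\<bar>u m $ i\<bar> * \<bar>v m $ j\<bar> \<le> a * b * ((1/2) * ((C (u m))\<^sup>2 + (R (v m))\<^sup>2))" .
    qed
    also have "\<dots> = a * b * s" unfolding sv dec_cost_def by (simp add: sum_distrib_left)
    finally show ?thesis .
  qed
  then show ?thesis using a(1) b(1) that[of "a * b"] by auto
qed

lemma dec_costs_iff: "s \<in> dec_costs C R X \<longleftrightarrow> (\<exists>M. s \<in> rank_costs C R M X)"
  unfolding dec_costs_def by blast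

lemma dec_costs_nonempty: "dec_costs C R X \<noteq> {}"
  using rank_costs_nonempty unfolding dec_costs_def by (metis UN_I UNIV_I ex_in_conv)

lemma dec_costs_nonneg:
  assumes "s \<in> dec_costs C R X"
  shows "0 \<le> s"
proof -
  obtain M where "s \<in> rank_costs C R M X" using assms unfolding dec_costs_def by blast
  then show ?thesis by (rule rank_costsE) (simp add: dec_cost_nonneg)
qed

section \<open>The limit of f_D^M\<close>

lemma fDM_tendsto_Inf:
  assumes C: "is_norm C" and R: "is_norm R"
  shows "(\<lambda>M. fDM C R M X) \<longlonglongrightarrow> ereal (Inf (dec_costs C R X))"
proof -
  have dec: "decseq (\<lambda>M. fDM C R M X)"
  proof (rule decseq_SucI)
    fix M
    have "rank_costs C R M X \<subseteq> rank_costs C R (Suc M) X" by (rule rank_costs_mono[OF C R]) simp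
    then show "fDM C R (Suc M) X \<le> fDM C R M X" unfolding fDM_eq_INF by (rule INF_superset_mono) simp
  qed
  have "(INF M. fDM C R M X) = (INF s\<in>dec_costs C R X. ereal s)"
    unfolding fDM_eq_INF dec_costs_def
    by (rule antisym) (auto intro!: INF_greatest intro: INF_lower2)
  also have "\<dots> = ereal (Inf (dec_costs C R X))"
    using dec_costs_nonneg dec_costs_nonempty by (intro ereal_Inf'[symmetric] bdd_belowI) blast+
  finally show ?thesis using LIMSEQ_INF[OF dec] by simp
qed

lemma dec_costs_inf_is_norm:
  assumes C: "is_norm C" and R: "is_norm R"
  shows "is_norm (\<lambda>X. Inf (dec_costs C R X))"
proof (rule inf_cost_is_norm)
  show "\<bar>c\<bar> * s \<in> dec_costs C R (c *\<^sub>R X)" if "s \<in> dec_costs C R X" for c X s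
    using that rank_costs_scale[OF C R] unfolding dec_costs_iff by blast
  show "s + t \<in> dec_costs C R (X + Y)" if "s \<in> dec_costs C R X" "t \<in> dec_costs C R Y" for X Y s t
    using that rank_costs_add unfolding dec_costs_iff by blast
  obtain K where K: "K > 0" "\<And>M X s i j. s \<in> rank_costs C R M X \<Longrightarrow> \<bar>X $ i $ j\<bar> \<le> K * s"
    using rank_costs_entry_bound[OF C R] by blast
  show "\<exists>e>0. \<forall>s\<in>dec_costs C R X. e \<le> s" if "X \<noteq> 0" for X
  proof -
    obtain i j where entry: "X $ i $ j \<noteq> 0" using \<open>X \<noteq> 0\<close> by (auto simp: vec_eq_iff)
    have "\<bar>X $ i $ j\<bar> / K \<le> s" if s: "s \<in> dec_costs C R X" for s
    proof -
      obtain M where "s \<in> rank_costs C R M X" using s unfolding dec_costs_iff by blast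
      then have "\<bar>X $ i $ j\<bar> \<le> K * s" by (rule K(2))
      then show ?thesis using K(1) by (simp add: divide_le_eq mult.commute)
    qed
    moreover have "\<bar>X $ i $ j\<bar> / K > 0" using entry K(1) by simp
    ultimately show ?thesis by blast
  qed
qed (fact dec_costs_nonempty dec_costs_nonneg)+

theorem proposition1:
  fixes C :: "real^'n \<Rightarrow> real" and R :: "real^'p \<Rightarrow> real"
  assumes "is_norm C" and "is_norm R"
  shows "(\<forall>X. \<exists>L::real. (\<lambda>M. fDM C R M X) \<longlonglongrightarrow> ereal L)
         \<and> is_norm (fD_inf C R)"
proof
  show "\<forall>X. \<exists>L::real. (\<lambda>M. fDM C R M X) \<longlonglongrightarrow> ereal L"
    using fDM_tendsto_Inf[OF assms] by blast
  have "fD_inf C R = (\<lambda>X. Inf (dec_costs C R X))"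
    unfolding fD_inf_def using limI[OF fDM_tendsto_Inf[OF assms]] by auto
  then show "is_norm (fD_inf C R)" using dec_costs_inf_is_norm[OF assms] by simp
qed

end
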